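(* Let $\mathcal U$ be a finite set with $|\mathcal U|=n$, let $V'\subseteq\mathbb{R}^{\mathcal U}$ be a linear subspace, and let $f_0\in\mathbb{R}^{\mathcal U}$ be nonzero with support $S=\{u:f_0(u)\neq0\}$ satisfying $|S|\le\mu n$ for some $\mu>0$. Let $V=\mathrm{span}(V'\cup\{f_0\})$ and let $f\in\mathbb{R}^{\mathcal U}$ be nonzero. Suppose there are $\alpha>0$, $\epsilon\in[0,1)$ and $\eta\ge0$ such that: (i) $\|f'\|_2\le\alpha\|f'\|_1$ for all $f'\in V'$; (ii) $\langle f_0,f\rangle\ge(1-\epsilon)\|f_0\|_2\|f\|_2$; (iii) $\langle f',f\rangle\le\eta\|f'\|_2\|f\|_2$ for all $f'\in V'$; (iv) $\dfrac{\eta}{1-\epsilon}<\dfrac{1}{\alpha\sqrt{\mu}}-2$. Then $f_0/\langle f_0,f\rangle$ is the unique optimal solution of the linear program $\min\{\|y\|_1: y\in V,\ \langle y,f\rangle=1\}$.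
   Context: All norms and inner products use the uniform (expectation) measure on $\mathcal U$: $\langle g,h\rangle=\mathbb{E}_{u\in\mathcal U}g(u)h(u)$, $\|g\|_p=(\mathbb{E}_{u\in\mathcal U}|g(u)|^p)^{1/p}$. *)

theory Defs
  imports "HOL-Analysis.Analysis"
begin

text \<open>Elements of R^U, U a finite type 'u (vectors real^'u), with the uniform (expectation) measure.\<close>

definition ip :: "real ^ 'u::finite \<Rightarrow> real ^ 'u \<Rightarrow> real" where
  "ip g h = (\<Sum>u\<in>UNIV. g $ u * h $ u) / real CARD('u)"

definition norm1 :: "real ^ 'u::finite \<Rightarrow> real" where
  "norm1 g = (\<Sum>u\<in>UNIV. \<bar>g $ u\<bar>) / real CARD('u)"

definition norm2 :: "real ^ 'u::finite \<Rightarrow> real" where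
  "norm2 g = sqrt ((\<Sum>u\<in>UNIV. (g $ u)^2) / real CARD('u))"

definition unique_LP_opt :: "(real ^ 'u::finite) set \<Rightarrow> real ^ 'u \<Rightarrow> real ^ 'u \<Rightarrow> bool" where
  "unique_LP_opt V f y0 \<longleftrightarrow>
     y0 \<in> V \<and> ip y0 f = 1 \<and>
     (\<forall>y. y \<in> V \<and> ip y f = 1 \<and> y \<noteq> y0 \<longrightarrow> norm1 y0 < norm1 y)"

end

theory Submission
  imports Defs
begin

text \<open>Write a feasible point as \<open>y = y\<^sub>0 + g + t f\<^sub>0\<close> with \<open>g \<in> V'\<close> and \<open>y\<^sub>0 = f\<^sub>0 / \<langle>f\<^sub>0,f\<rangle>\<close>.
  The constraint \<open>\<langle>y,f\<rangle> = 1\<close> forces \<open>t \<langle>f\<^sub>0,f\<rangle> = -\<langle>g,f\<rangle>\<close>, so by (ii) and (iii) the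
  coefficient \<open>t\<close> is controlled by \<open>\<eta>/(1-\<epsilon>) \<parallel>g\<parallel>\<^sub>2\<close>. On the support \<open>S\<close> of \<open>f\<^sub>0\<close> adding \<open>g\<close>
  can decrease the \<open>\<ell>\<^sub>1\<close>-norm by at most \<open>2\<parallel>g 1\<^sub>S\<parallel>\<^sub>1\<close>, while off \<open>S\<close> it adds \<open>\<parallel>g\<parallel>\<^sub>1\<close>;
  Cauchy-Schwarz bounds \<open>\<ell>\<^sub>1\<close>-mass on \<open>S\<close> by \<open>\<surd>\<mu> \<parallel>\<cdot>\<parallel>\<^sub>2\<close>, and (i) bounds \<open>\<parallel>g\<parallel>\<^sub>1\<close> below by
  \<open>\<parallel>g\<parallel>\<^sub>2/\<alpha>\<close>. Altogether \<open>\<parallel>y\<parallel>\<^sub>1 - \<parallel>y\<^sub>0\<parallel>\<^sub>1 \<ge> \<parallel>g\<parallel>\<^sub>2 (1/\<alpha> - 2\<surd>\<mu> - \<surd>\<mu> \<eta>/(1-\<epsilon>)) > 0\<close> unless \<open>y = y\<^sub>0\<close>.\<close>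

lemma ip_add_left: "ip (a + b) f = ip a f + ip b f"
  by (simp add: ip_def sum.distrib distrib_right add_divide_distrib)

lemma ip_scaleR_left: "ip (c *\<^sub>R a) f = c * ip a f"
  by (simp add: ip_def sum_distrib_left mult.assoc)

lemma ip_uminus_left: "ip (- a) f = - ip a f"
  by (simp add: ip_def sum_negf)

lemma ip_zero_left: "ip 0 f = 0"
  by (simp add: ip_def)

lemma norm2_uminus: "norm2 (- a) = norm2 a"
  by (simp add: norm2_def)

lemma norm2_nonneg: "0 \<le> norm2 g"
  by (simp add: norm2_def sum_nonneg)

lemma norm2_pos:
  fixes g :: "real ^ 'u::finite"
  assumes "g \<noteq> 0"
  shows "norm2 g > 0"
proof -
  obtain u where "g $ u \<noteq> 0" using assms by (metis vec_eq_iff zero_index)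
  then have "0 < (g $ u)\<^sup>2" by simp
  also have "\<dots> \<le> (\<Sum>v\<in>UNIV. (g $ v)\<^sup>2)" by (rule member_le_sum) auto
  finally show ?thesis unfolding norm2_def by simp
qed

lemma norm1_add_le: "norm1 (a + b) \<le> norm1 a + norm1 b"
proof -
  have "(\<Sum>u\<in>UNIV. \<bar>(a + b) $ u\<bar>) \<le> (\<Sum>u\<in>UNIV. \<bar>a $ u\<bar>) + (\<Sum>u\<in>UNIV. \<bar>b $ u\<bar>)"
    by (simp add: sum.distrib[symmetric] sum_mono abs_triangle_ineq)
  then show ?thesis
    unfolding norm1_def add_divide_distrib[symmetric] by (simp add: divide_right_mono)
qed

lemma norm1_scaleR: "norm1 (c *\<^sub>R a) = \<bar>c\<bar> * norm1 a"
  by (simp add: norm1_def abs_mult sum_distrib_left)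

lemma sum_abs_le_sqrt_card_norm2:
  fixes g :: "real ^ 'u::finite"
  shows "(\<Sum>u\<in>S. \<bar>g $ u\<bar>) / real CARD('u) \<le> sqrt (real (card S) / real CARD('u)) * norm2 g"
proof -
  define n where "n = real CARD('u)"
  define Q where "Q = (\<Sum>u\<in>UNIV. (g $ u)\<^sup>2)"
  have "(\<Sum>u\<in>S. \<bar>g $ u\<bar>) = (\<Sum>u\<in>S. \<bar>1::real\<bar> * \<bar>g $ u\<bar>)" by simp
  also have "\<dots> \<le> L2_set (\<lambda>_. 1::real) S * L2_set (\<lambda>u. g $ u) S"
    by (rule L2_set_mult_ineq)
  also have "\<dots> \<le> sqrt (real (card S)) * sqrt Q"
    unfolding Q_def L2_set_def
    by (auto intro!: mult_left_mono real_sqrt_le_mono sum_mono2)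
  also have "\<dots> = sqrt (real (card S) / n) * sqrt (Q / n) * n"
    by (simp add: n_def real_sqrt_divide real_sqrt_mult[symmetric])
  finally show ?thesis
    unfolding norm2_def Q_def[symmetric] n_def[symmetric] by (simp add: n_def pos_divide_le_eq)
qed

lemma norm1_le_sqrt_card_support_norm2:
  fixes g :: "real ^ 'u::finite"
  assumes "\<forall>u. u \<notin> S \<longrightarrow> g $ u = 0"
  shows "norm1 g \<le> sqrt (real (card S) / real CARD('u)) * norm2 g"
proof -
  have "(\<Sum>u\<in>UNIV. \<bar>g $ u\<bar>) = (\<Sum>u\<in>S. \<bar>g $ u\<bar>)"
    using assms by (intro sum.mono_neutral_right) auto
  then show ?thesis using sum_abs_le_sqrt_card_norm2[of g S] by (simp add: norm1_def)
qed

lemma norm1_add_ge_support: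
  fixes a g :: "real ^ 'u::finite"
  assumes "\<forall>u. u \<notin> S \<longrightarrow> a $ u = 0"
  shows "norm1 a + norm1 g - 2 * ((\<Sum>u\<in>S. \<bar>g $ u\<bar>) / real CARD('u)) \<le> norm1 (a + g)"
proof -
  have pointwise: "\<bar>a $ u\<bar> + \<bar>g $ u\<bar> - 2 * (if u \<in> S then \<bar>g $ u\<bar> else 0) \<le> \<bar>(a + g) $ u\<bar>" for u
    using assms by (cases "u \<in> S") auto
  define n where "n = real CARD('u)"
  have "(\<Sum>u\<in>UNIV. \<bar>a $ u\<bar>) + (\<Sum>u\<in>UNIV. \<bar>g $ u\<bar>) - 2 * (\<Sum>u\<in>S. \<bar>g $ u\<bar>)
      = (\<Sum>u\<in>UNIV. \<bar>a $ u\<bar> + \<bar>g $ u\<bar> - 2 * (if u \<in> S then \<bar>g $ u\<bar> else 0))"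
    by (simp add: sum.distrib sum_subtractf sum_distrib_left[symmetric] sum.If_cases)
  also have "\<dots> \<le> (\<Sum>u\<in>UNIV. \<bar>(a + g) $ u\<bar>)"
    using pointwise by (rule sum_mono)
  finally have "((\<Sum>u\<in>UNIV. \<bar>a $ u\<bar>) + (\<Sum>u\<in>UNIV. \<bar>g $ u\<bar>) - 2 * (\<Sum>u\<in>S. \<bar>g $ u\<bar>)) / n
      \<le> (\<Sum>u\<in>UNIV. \<bar>(a + g) $ u\<bar>) / n"
    by (rule divide_right_mono) (simp add: n_def)
  then show ?thesis unfolding norm1_def n_def by (simp only: add_divide_distrib diff_divide_distrib)
qed

lemma span_insert_subspace:
  assumes "subspace V"
  shows "span (V \<union> {x}) = {y. \<exists>c. y - c *\<^sub>R x \<in> V}"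
proof -
  have "span V = V" using assms by (rule span_eq_iff[THEN iffD2])
  then show ?thesis using span_insert[of x V] by (simp only: Un_insert_right sup_bot_right)
qed

lemma abs_ip_le_subspace:
  assumes "subspace V" and "\<forall>h\<in>V. ip h f \<le> \<eta> * norm2 h * norm2 f" and "g \<in> V"
  shows "\<bar>ip g f\<bar> \<le> \<eta> * norm2 g * norm2 f"
proof -
  have "- g \<in> V" using assms(1,3) by (rule subspace_neg)
  then have "ip (- g) f \<le> \<eta> * norm2 (- g) * norm2 f" using assms(2) by blast
  then have "- ip g f \<le> \<eta> * norm2 g * norm2 f" by (simp only: ip_uminus_left norm2_uminus)
  moreover have "ip g f \<le> \<eta> * norm2 g * norm2 f" using assms(2,3) by blast
  ultimately show ?thesis by linarith
qed

lemma coefficient_bound: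
  assumes "ip g f + t * ip f0 f = 0"
    and "\<bar>ip g f\<bar> \<le> \<eta> * norm2 g * norm2 f"
    and "(1 - \<epsilon>) * norm2 f0 * norm2 f \<le> ip f0 f"
    and "\<epsilon> < 1" and "f \<noteq> 0"
  shows "\<bar>t\<bar> * norm2 f0 \<le> \<eta> / (1 - \<epsilon>) * norm2 g"
proof -
  have pos: "0 < (1 - \<epsilon>) * norm2 f" using assms(4) norm2_pos[OF assms(5)] by simp
  have "0 \<le> ip f0 f" using assms(3) pos norm2_nonneg[of f0] by (metis mult.commute mult.left_commute
        mult_nonneg_nonneg less_imp_le order_trans)
  have "(\<bar>t\<bar> * norm2 f0) * ((1 - \<epsilon>) * norm2 f) = \<bar>t\<bar> * ((1 - \<epsilon>) * norm2 f0 * norm2 f)"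
    by (simp only: mult_ac)
  also have "\<dots> \<le> \<bar>t\<bar> * ip f0 f"
    using assms(3) by (rule mult_left_mono) simp
  also have "\<dots> = \<bar>t * ip f0 f\<bar>"
    using \<open>0 \<le> ip f0 f\<close> by (simp add: abs_mult)
  also have "\<dots> = \<bar>ip g f\<bar>"
    using assms(1) by (simp add: add_eq_0_iff2)
  also have "\<dots> \<le> (\<eta> / (1 - \<epsilon>) * norm2 g) * ((1 - \<epsilon>) * norm2 f)"
    using assms(2,4) by simp
  finally show ?thesis using pos by (rule mult_right_le_imp_le)
qed

lemma feasible_decomposition:
  assumes "subspace V" and "y \<in> span (V \<union> {f0})" and "ip y f = 1" and "ip f0 f \<noteq> 0"
    and "y \<noteq> (1 / ip f0 f) *\<^sub>R f0"
  obtains g t where "g \<in> V" and "g \<noteq> 0" and "y = (1 / ip f0 f) *\<^sub>R f0 + g + t *\<^sub>R f0"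
    and "ip g f + t * ip f0 f = 0"
proof -
  obtain c where g: "y - c *\<^sub>R f0 \<in> V"
    using assms(1,2) span_insert_subspace by blast
  define t where "t = c - 1 / ip f0 f"
  have y: "y = (1 / ip f0 f) *\<^sub>R f0 + (y - c *\<^sub>R f0) + t *\<^sub>R f0"
    by (simp add: t_def algebra_simps)
  then have "ip y f = 1 + ip (y - c *\<^sub>R f0) f + t * ip f0 f"
    using assms(4) by (metis ip_add_left ip_scaleR_left nonzero_divide_eq_eq)
  then have constraint: "ip (y - c *\<^sub>R f0) f + t * ip f0 f = 0" using assms(3) by simp
  have "y - c *\<^sub>R f0 \<noteq> 0"
  proof
    assume "y - c *\<^sub>R f0 = 0"
    then have "t = 0" using constraint assms(4) by (simp add: ip_zero_left)
    with \<open>y - c *\<^sub>R f0 = 0\<close> y assms(5) show False by simp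
  qed
  with g show ?thesis using y constraint by (rule that)
qed

lemma norm1_lt_perturbed:
  fixes y0 g f0 :: "real ^ 'u::finite"
  assumes y0_support: "\<forall>u. u \<notin> S \<longrightarrow> y0 $ u = 0"
    and f0_support: "\<forall>u. u \<notin> S \<longrightarrow> f0 $ u = 0"
    and density: "sqrt (real (card S) / real CARD('u)) \<le> \<sigma>"
    and spread: "norm2 g \<le> \<alpha> * norm1 g" and "\<alpha> > 0" and "g \<noteq> 0"
    and coefficient: "\<bar>t\<bar> * norm2 f0 \<le> \<kappa> * norm2 g"
    and gap: "\<sigma> * \<kappa> < 1 / \<alpha> - 2 * \<sigma>"
  shows "norm1 y0 < norm1 (y0 + g + t *\<^sub>R f0)"
proof -
  define \<rho> where "\<rho> = sqrt (real (card S) / real CARD('u))"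
  have "0 \<le> \<rho>" by (simp add: \<rho>_def)
  with density have "0 \<le> \<sigma>" unfolding \<rho>_def by linarith
  have "0 < norm2 g" using \<open>g \<noteq> 0\<close> by (rule norm2_pos)
  have "norm1 y0 + norm1 g - 2 * (\<rho> * norm2 g) \<le> norm1 (y0 + g)"
    using norm1_add_ge_support[OF y0_support, of g] sum_abs_le_sqrt_card_norm2[of g S]
    unfolding \<rho>_def by linarith
  moreover have "norm1 (y0 + g) \<le> norm1 (y0 + g + t *\<^sub>R f0) + \<bar>t\<bar> * norm1 f0"
    using norm1_add_le[of "y0 + g + t *\<^sub>R f0" "(- t) *\<^sub>R f0"] norm1_scaleR[of "- t" f0]
    by simp
  moreover have "\<bar>t\<bar> * norm1 f0 \<le> \<sigma> * (\<kappa> * norm2 g)"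
  proof -
    have "norm1 f0 \<le> \<sigma> * norm2 f0"
      using norm1_le_sqrt_card_support_norm2[OF f0_support] density norm2_nonneg[of f0]
      by (meson mult_right_mono order_trans)
    then have "\<bar>t\<bar> * norm1 f0 \<le> \<bar>t\<bar> * (\<sigma> * norm2 f0)"
      by (rule mult_left_mono) simp
    also have "\<dots> = \<sigma> * (\<bar>t\<bar> * norm2 f0)"
      by (simp only: mult_ac)
    also have "\<dots> \<le> \<sigma> * (\<kappa> * norm2 g)"
      using coefficient \<open>0 \<le> \<sigma>\<close> by (rule mult_left_mono)
    finally show ?thesis .
  qed
  moreover have "norm2 g / \<alpha> \<le> norm1 g"
    using spread \<open>\<alpha> > 0\<close> by (simp add: divide_le_eq mult.commute)
  moreover have "\<rho> * norm2 g \<le> \<sigma> * norm2 g"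
    using density \<open>0 < norm2 g\<close> unfolding \<rho>_def by simp
  moreover have "\<sigma> * (\<kappa> * norm2 g) < norm2 g / \<alpha> - 2 * (\<sigma> * norm2 g)"
    using mult_strict_right_mono[OF gap \<open>0 < norm2 g\<close>] by (simp add: algebra_simps)
  ultimately show ?thesis by linarith
qed

theorem theorem5p3:
  fixes V' :: "(real ^ 'u::finite) set"
    and f0 f :: "real ^ 'u"
    and \<mu> \<alpha> \<epsilon> \<eta> :: real
  assumes "subspace V'"
    and "f0 \<noteq> 0"
    and "\<mu> > 0"
    and "real (card {u. f0 $ u \<noteq> 0}) \<le> \<mu> * real CARD('u)"
    and "f \<noteq> 0"
    and "\<alpha> > 0" and "0 \<le> \<epsilon>" and "\<epsilon> < 1" and "\<eta> \<ge> 0"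
    and "\<forall>f'\<in>V'. norm2 f' \<le> \<alpha> * norm1 f'"
    and "ip f0 f \<ge> (1 - \<epsilon>) * norm2 f0 * norm2 f"
    and "\<forall>f'\<in>V'. ip f' f \<le> \<eta> * norm2 f' * norm2 f"
    and "\<eta> / (1 - \<epsilon>) < 1 / (\<alpha> * sqrt \<mu>) - 2"
  shows "unique_LP_opt (span (V' \<union> {f0})) f ((1 / ip f0 f) *\<^sub>R f0)"
proof -
  define S where "S = {u. f0 $ u \<noteq> 0}"
  define y0 where "y0 = (1 / ip f0 f) *\<^sub>R f0"
  have f0_support: "\<forall>u. u \<notin> S \<longrightarrow> f0 $ u = 0" and y0_support: "\<forall>u. u \<notin> S \<longrightarrow> y0 $ u = 0"
    by (simp_all add: S_def y0_def)
  have "0 < (1 - \<epsilon>) * norm2 f0 * norm2 f"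
    using assms(8) norm2_pos[OF assms(2)] norm2_pos[OF assms(5)] by simp
  then have "ip f0 f > 0" using assms(11) by linarith
  then have "ip y0 f = 1" by (simp add: y0_def ip_scaleR_left)
  have "y0 \<in> span (V' \<union> {f0})" unfolding y0_def by (rule span_mul) (simp add: span_base)
  have "real (card S) / real CARD('u) \<le> \<mu>"
    using assms(4) by (simp add: S_def pos_divide_le_eq)
  then have density: "sqrt (real (card S) / real CARD('u)) \<le> sqrt \<mu>"
    by (rule real_sqrt_le_mono)
  have "sqrt \<mu> * (1 / (\<alpha> * sqrt \<mu>) - 2) = 1 / \<alpha> - 2 * sqrt \<mu>"
    using assms(3) by (simp add: right_diff_distrib)
  then have gap: "sqrt \<mu> * (\<eta> / (1 - \<epsilon>)) < 1 / \<alpha> - 2 * sqrt \<mu>"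
    using mult_strict_left_mono[OF assms(13), of "sqrt \<mu>"] assms(3) by simp
  have "norm1 y0 < norm1 y"
    if feasible: "y \<in> span (V' \<union> {f0})" "ip y f = 1" and distinct: "y \<noteq> y0" for y
  proof -
    obtain g t where g: "g \<in> V'" and "g \<noteq> 0" and y: "y = y0 + g + t *\<^sub>R f0"
      and constraint: "ip g f + t * ip f0 f = 0"
      using \<open>ip f0 f > 0\<close> distinct
        feasible_decomposition[OF assms(1) feasible, folded y0_def] by (metis less_irrefl)
    have spread: "norm2 g \<le> \<alpha> * norm1 g" using assms(10) g by blast
    have "\<bar>t\<bar> * norm2 f0 \<le> \<eta> / (1 - \<epsilon>) * norm2 g"
      using coefficient_bound[OF constraint abs_ip_le_subspace[OF assms(1,12) g] assms(11,8,5)] .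
    then show ?thesis unfolding y
      by (rule norm1_lt_perturbed[OF y0_support f0_support density spread assms(6) \<open>g \<noteq> 0\<close> _ gap])
  qed
  then show ?thesis
    unfolding unique_LP_opt_def y0_def[symmetric]
    using \<open>y0 \<in> span (V' \<union> {f0})\<close> \<open>ip y0 f = 1\<close> by blast
qed

end
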